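(* Let $f=\frac1n\sum_{i=1}^nf_i$ with $x^*$ a minimizer, $\mathbf W\succ0$, and let $\theta_{\mathbf S}$ satisfy $\mathbb{E}_{\mathcal D}[\theta_{\mathbf S}\Pi_{\mathbf S}e]=e$. Assume there is $\mathcal L_1>0$ with $\mathbb{E}_{\mathcal D}\|\nabla f_{\mathbf S}(x)-\nabla f_{\mathbf S}(x^* )\|_2^2\le2\mathcal L_1(f(x)-f(x^* ))$ for all $x$. Then the JacSketch gradient estimate satisfies $$\mathbb{E}_{\mathcal D}\|g^k\|_2^2\le4\mathcal L_1(f(x^k)-f(x^* ))+\frac{2\rho}{n^2}\|\mathbf J^k-\mathbf G(x^* )\|_{\mathbf W^{-1}}^2,$$ with expectation over $\mathbf S_k$ conditional on $x^k,\mathbf J^k$.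
   Context: $\mathbf G(x)=[\nabla f_1(x),\dots,\nabla f_n(x)]$, $F(x)=(f_1(x),\dots,f_n(x))^\top$, $e$ all-ones, $\Pi_{\mathbf S}=\mathbf S(\mathbf S^\top\mathbf W\mathbf S)^\dagger\mathbf S^\top\mathbf W$, $\nabla f_{\mathbf S}(x)=\frac{\theta_{\mathbf S}}n\mathbf G(x)\Pi_{\mathbf S}e$, $\|\mathbf X\|_{\mathbf W^{-1}}^2=\mathrm{Tr}(\mathbf X\mathbf W^{-1}\mathbf X^\top)$, $\rho=\lambda_{\max}\big(\mathbf W^{1/2}(\mathbb{E}_{\mathcal D}[\theta_{\mathbf S}^2\Pi_{\mathbf S}ee^\top\Pi_{\mathbf S}^\top]-ee^\top)\mathbf W^{1/2}\big)$. JacSketch gradient estimate: $g^k=\frac1n\mathbf J^ke+\frac{\theta_{\mathbf S_k}}n(\mathbf G(x^k)-\mathbf J^k)\Pi_{\mathbf S_k}e$ with $\mathbf S_k\sim\mathcal D$ and $\mathbf J^k\in\mathbb{R}^{d\times n}$ the current Jacobian estimate. *)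

theory Defs
  imports "HOL-Analysis.Analysis" "HOL-Probability.Probability"
begin

definition pinv :: "real^'b^'a \<Rightarrow> real^'a^'b" where
  "pinv A = (THE X. A ** X ** A = A \<and> X ** A ** X = X \<and>
       transpose (A ** X) = A ** X \<and> transpose (X ** A) = X ** A)"

definition sketch_proj :: "real^'n^'n \<Rightarrow> real^'q^'n \<Rightarrow> real^'n^'n" where
  "sketch_proj W S = S ** pinv (transpose S ** W ** S) ** transpose S ** W"

definition ones :: "real^'n" where "ones = (\<chi> i. 1)"

definition outer :: "real^'n \<Rightarrow> real^'m \<Rightarrow> real^'m^'n" where
  "outer u v = (\<chi> i j. u $ i * v $ j)"

definition jac :: "('n \<Rightarrow> real^'d \<Rightarrow> real^'d) \<Rightarrow> real^'d \<Rightarrow> real^'n^'d" where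
  "jac gradf x = (\<chi> a i. gradf i x $ a)"

definition favg :: "('n::finite \<Rightarrow> real^'d \<Rightarrow> real) \<Rightarrow> real^'d \<Rightarrow> real" where
  "favg fs x = (\<Sum>i\<in>UNIV. fs i x) / real CARD('n)"

definition grad_sketch ::
  "('n::finite \<Rightarrow> real^'d \<Rightarrow> real^'d) \<Rightarrow> real^'n^'n \<Rightarrow> real \<Rightarrow> real^'q^'n \<Rightarrow> real^'d \<Rightarrow> real^'d" where
  "grad_sketch gradf W th S x =
     (th / real CARD('n)) *\<^sub>R (jac gradf x *v (sketch_proj W S *v ones))"

definition pos_def :: "real^'n^'n \<Rightarrow> bool" where
  "pos_def W \<longleftrightarrow> transpose W = W \<and> (\<forall>v. v \<noteq> 0 \<longrightarrow> v \<bullet> (W *v v) > 0)"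

definition mat_sqrt :: "real^'n^'n \<Rightarrow> real^'n^'n" where
  "mat_sqrt W = (THE R. transpose R = R \<and> (\<forall>v. v \<bullet> (R *v v) \<ge> 0) \<and> R ** R = W)"

definition lambda_max :: "real^'n^'n \<Rightarrow> real" where
  "lambda_max A = Max {l. \<exists>v. v \<noteq> 0 \<and> A *v v = l *\<^sub>R v}"

definition wnorm_sq :: "real^'n^'d \<Rightarrow> real^'n^'n \<Rightarrow> real" where
  "wnorm_sq X W = trace (X ** matrix_inv W ** transpose X)"

definition rho :: "'s measure \<Rightarrow> real^'n^'n \<Rightarrow> ('s \<Rightarrow> real) \<Rightarrow> ('s \<Rightarrow> real^'q^'n) \<Rightarrow> real" where
  "rho D W th S = lambda_max (mat_sqrt W **
      ((\<integral>s. outer (th s *\<^sub>R (sketch_proj W (S s) *v ones))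
                      (th s *\<^sub>R (sketch_proj W (S s) *v ones)) \<partial>D) - outer ones ones)
      ** mat_sqrt W)"

end

theory Submission
  imports Defs
begin

text \<open>Write v = \<theta>_S \<Pi>_S e, so that E v = e, and note G(x*) e = 0 at the minimiser. Then the
  estimate splits as g = (1/n) (G(x) - G(x*)) v + (1/n) (J - G(x*)) (e - v), and
  |a + b|^2 \<le> 2 |a|^2 + 2 |b|^2. The first part is exactly the smoothness hypothesis. For the
  second, a row m of J - G(x*) contributes E[(m \<bullet> (e - v))^2] = m^T C m with the covariance
  C = E[v v^T] - e e^T, and the substitution m = W^{1/2} y bounds this by
  \<lambda>_max(W^{1/2} C W^{1/2}) m^T W^{-1} m. The spectral theorem behind \<lambda>_max and W^{1/2} is
  obtained by maximising the quadratic form on unit spheres of invariant subspaces.\<close>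

definition psd_matrix :: "real^'n^'n \<Rightarrow> bool" where
  "psd_matrix R \<longleftrightarrow> transpose R = R \<and> (\<forall>v. 0 \<le> v \<bullet> (R *v v))"

lemma symmetric_inner_matrix_vector:
  fixes A :: "real^'n^'n"
  assumes "transpose A = A"
  shows "x \<bullet> (A *v y) = (A *v x) \<bullet> y"
  by (metis assms dot_lmul_matrix transpose_matrix_vector)

lemma nonpos_if_le_all_pos_multiples:
  fixes a c :: "'a::linordered_field"
  assumes "\<And>t. t > 0 \<Longrightarrow> a \<le> t * c"
  shows "a \<le> 0"
proof (rule ccontr)
  assume a: "\<not> a \<le> 0"
  show False
  proof (cases "c \<le> 0")
    case True
    then show False using assms[of 1] a by simp
  next
    case False
    then have "a \<le> (a / (2 * c)) * c" using assms[of "a / (2 * c)"] a by simp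
    also have "\<dots> = a / 2" using False by simp
    finally show False using a by simp
  qed
qed

text \<open>Positivity of the form along x - t R x gives 2 t |R x|^2 \<le> t^2 (R x) \<bullet> R (R x) for all t > 0.\<close>
lemma psd_matrix_vector_eq_0:
  fixes R :: "real^'n^'n"
  assumes R: "psd_matrix R" and x: "x \<bullet> (R *v x) = 0"
  shows "R *v x = 0"
proof -
  have sym: "transpose R = R" and psd: "\<And>v. 0 \<le> v \<bullet> (R *v v)"
    using R unfolding psd_matrix_def by auto
  define y where "y = R *v x"
  have "y \<bullet> y \<le> 0"
  proof (rule nonpos_if_le_all_pos_multiples[of _ "(y \<bullet> (R *v y)) / 2"])
    fix t :: real assume t: "t > 0"
    have "0 \<le> (x - t *\<^sub>R y) \<bullet> (R *v (x - t *\<^sub>R y))" by (rule psd)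
    also have "\<dots> = x \<bullet> (R *v x) - t * (x \<bullet> (R *v y)) - t * (y \<bullet> (R *v x)) + t * t * (y \<bullet> (R *v y))"
      by (simp add: matrix_vector_mult_diff_distrib matrix_vector_mult_scaleR inner_diff_left
          inner_diff_right algebra_simps)
    also have "x \<bullet> (R *v y) = y \<bullet> y" using symmetric_inner_matrix_vector[OF sym, of x y] y_def by simp
    also have "y \<bullet> (R *v x) = y \<bullet> y" using y_def by simp
    finally have "t * (2 * (y \<bullet> y)) \<le> t * (t * (y \<bullet> (R *v y)))" using x by (simp add: algebra_simps)
    then show "y \<bullet> y \<le> t * ((y \<bullet> (R *v y)) / 2)" using t by simp
  qed
  then show ?thesis using y_def by (metis inner_eq_zero_iff inner_ge_zero order_antisym)
qed

lemma quadratic_form_max_on_subspace: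
  fixes A :: "real^'n^'n"
  assumes V: "subspace V" and nontrivial: "V \<noteq> {0}"
  obtains u where "u \<in> V" "norm u = 1" "\<And>x. x \<in> V \<Longrightarrow> x \<bullet> (A *v x) \<le> (u \<bullet> (A *v u)) * (x \<bullet> x)"
proof -
  define K where "K = V \<inter> sphere 0 1"
  have "compact K" unfolding K_def by (intro closed_Int_compact closed_subspace V compact_sphere)
  obtain z where z: "z \<in> V" "z \<noteq> 0" using nontrivial V subspace_0 by blast
  have "z /\<^sub>R norm z \<in> K" unfolding K_def using z V by (simp add: subspace_scale)
  moreover have "continuous_on K (\<lambda>x. x \<bullet> (A *v x))"
    by (intro continuous_intros linear_continuous_on matrix_vector_mul_bounded_linear)
  ultimately obtain u where u: "u \<in> K" and u_max: "\<And>y. y \<in> K \<Longrightarrow> y \<bullet> (A *v y) \<le> u \<bullet> (A *v u)"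
    using continuous_attains_sup[OF \<open>compact K\<close>] by blast
  have "x \<bullet> (A *v x) \<le> (u \<bullet> (A *v u)) * (x \<bullet> x)" if x: "x \<in> V" for x
  proof (cases "x = 0")
    case False
    have "x /\<^sub>R norm x \<in> K" unfolding K_def using x False V by (simp add: subspace_scale)
    then have "(x /\<^sub>R norm x) \<bullet> (A *v (x /\<^sub>R norm x)) \<le> u \<bullet> (A *v u)" by (rule u_max)
    then have "(x \<bullet> (A *v x)) / (norm x)^2 \<le> u \<bullet> (A *v u)"
      by (simp add: matrix_vector_mult_scaleR power2_eq_square divide_inverse mult_ac)
    then show ?thesis using False by (simp add: divide_le_eq dot_square_norm)
  qed simp
  then show thesis using that u unfolding K_def by auto
qed

text \<open>Perturbing the maximiser u along w = A u - (u \<bullet> A u) u \<in> V gives 2 t |w|^2 \<le> O(t^2).\<close>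
lemma quadratic_form_maximiser_is_eigenvector:
  fixes A :: "real^'n^'n"
  assumes sym: "transpose A = A" and V: "subspace V" and inv: "\<And>x. x \<in> V \<Longrightarrow> A *v x \<in> V"
    and u: "u \<in> V" "norm u = 1"
    and u_max: "\<And>x. x \<in> V \<Longrightarrow> x \<bullet> (A *v x) \<le> (u \<bullet> (A *v u)) * (x \<bullet> x)"
  shows "A *v u = (u \<bullet> (A *v u)) *\<^sub>R u"
proof -
  define l where "l = u \<bullet> (A *v u)"
  define w where "w = A *v u - l *\<^sub>R u"
  have uu: "u \<bullet> u = 1" using u by (simp add: dot_square_norm)
  have wV: "w \<in> V" unfolding w_def using u inv V by (simp add: subspace_diff subspace_scale)
  have uw: "u \<bullet> w = 0" unfolding w_def l_def using uu by (simp add: inner_diff_right)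
  have wAu: "w \<bullet> (A *v u) = w \<bullet> w" and uAw: "u \<bullet> (A *v w) = w \<bullet> w"
  proof -
    have "A *v u = w + l *\<^sub>R u" unfolding w_def by simp
    then show "w \<bullet> (A *v u) = w \<bullet> w" using uw by (simp add: inner_add_right inner_commute)
    then show "u \<bullet> (A *v w) = w \<bullet> w"
      using symmetric_inner_matrix_vector[OF sym, of u w] by (simp add: inner_commute)
  qed
  have "w \<bullet> w \<le> 0"
  proof (rule nonpos_if_le_all_pos_multiples[of _ "(l * (w \<bullet> w) - w \<bullet> (A *v w)) / 2"])
    fix t :: real assume t: "t > 0"
    have "u + t *\<^sub>R w \<in> V" using u wV V by (simp add: subspace_add subspace_scale)
    from u_max[OF this]
    have "l + 2 * t * (w \<bullet> w) + t * t * (w \<bullet> (A *v w)) \<le> l * (1 + t * t * (w \<bullet> w))"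
      using uu uw wAu uAw unfolding l_def
      by (simp add: matrix_vector_right_distrib matrix_vector_mult_scaleR inner_add_left
          inner_add_right inner_commute algebra_simps)
    then have "t * (2 * (w \<bullet> w)) \<le> t * (t * (l * (w \<bullet> w) - w \<bullet> (A *v w)))"
      by (simp add: algebra_simps)
    then show "w \<bullet> w \<le> t * ((l * (w \<bullet> w) - w \<bullet> (A *v w)) / 2)" using t by simp
  qed
  then have "w = 0" by (metis inner_eq_zero_iff inner_ge_zero order_antisym)
  then show ?thesis unfolding w_def l_def by simp
qed

lemma inner_sum_orthonormal:
  fixes B :: "'a::real_inner set"
  assumes "finite B" "pairwise orthogonal B" "c \<in> B" "norm c = 1"
  shows "c \<bullet> (\<Sum>b\<in>B. k b *\<^sub>R b) = k c"
proof -
  have "c \<bullet> (\<Sum>b\<in>B. k b *\<^sub>R b) = (\<Sum>b\<in>B. k b * (c \<bullet> b))"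
    by (simp add: inner_sum_right)
  also have "\<dots> = k c * (c \<bullet> c) + (\<Sum>b\<in>B - {c}. k b * (c \<bullet> b))"
    using assms(1,3) by (simp add: sum.remove)
  also have "(\<Sum>b\<in>B - {c}. k b * (c \<bullet> b)) = 0"
    using assms(2,3) by (intro sum.neutral) (auto simp: pairwise_def orthogonal_def)
  finally show ?thesis using assms(4) by (simp add: norm_eq_1)
qed

lemma dim_inter_orthogonal_less:
  fixes u :: "'a::euclidean_space"
  assumes V: "subspace V" and u: "u \<in> V" "u \<noteq> 0"
  shows "dim (V \<inter> {x. orthogonal u x}) < dim V"
proof -
  have V': "subspace (V \<inter> {x. orthogonal u x})"
    by (rule subspace_inter[OF V subspace_orthogonal_to_vector])
  have "u \<notin> V \<inter> {x. orthogonal u x}" using u(2) by (simp add: orthogonal_def)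
  then have "V \<inter> {x. orthogonal u x} \<subset> V" using u(1) by blast
  then show ?thesis
    using dim_subset[of "V \<inter> {x. orthogonal u x}" V] subspace_dim_equal[OF V' V]
    by (auto simp: psubset_eq)
qed

lemma symmetric_invariant_orthogonal_complement:
  fixes A :: "real^'n^'n"
  assumes sym: "transpose A = A" and inv: "\<forall>x\<in>V. A *v x \<in> V" and eig: "A *v u = c *\<^sub>R u"
  shows "\<forall>x\<in>V \<inter> {x. orthogonal u x}. A *v x \<in> V \<inter> {x. orthogonal u x}"
proof
  fix x assume x: "x \<in> V \<inter> {x. orthogonal u x}"
  have "u \<bullet> (A *v x) = (A *v u) \<bullet> x" by (rule symmetric_inner_matrix_vector[OF sym])
  also have "\<dots> = 0" using x unfolding eig orthogonal_def by simp
  finally show "A *v x \<in> V \<inter> {x. orthogonal u x}" using x inv unfolding orthogonal_def by auto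
qed

lemma orthonormal_expansion_insert:
  fixes u :: "'a::euclidean_space"
  assumes V: "subspace V" and u: "u \<in> V" "norm u = 1" and fin: "finite B"
    and B: "B \<subseteq> V \<inter> {x. orthogonal u x}" "pairwise orthogonal B"
    and expansion: "\<forall>y\<in>V \<inter> {x. orthogonal u x}. y = (\<Sum>b\<in>B. (b \<bullet> y) *\<^sub>R b)"
  shows "pairwise orthogonal (insert u B)" "\<forall>x\<in>V. x = (\<Sum>b\<in>insert u B. (b \<bullet> x) *\<^sub>R b)"
proof -
  have uu: "u \<bullet> u = 1" using u(2) by (simp add: norm_eq_1)
  have Bu: "\<And>b. b \<in> B \<Longrightarrow> u \<bullet> b = 0" and uB: "u \<notin> B"
    using B(1) uu unfolding orthogonal_def by auto
  show "pairwise orthogonal (insert u B)"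
    using B(2) Bu by (auto simp: pairwise_insert orthogonal_def intro: inner_commute[THEN trans])
  show "\<forall>x\<in>V. x = (\<Sum>b\<in>insert u B. (b \<bullet> x) *\<^sub>R b)"
  proof
    fix x assume x: "x \<in> V"
    define y where "y = x - (u \<bullet> x) *\<^sub>R u"
    have "y \<in> V \<inter> {x. orthogonal u x}" unfolding y_def orthogonal_def using x u V uu
      by (auto simp: subspace_diff subspace_scale inner_diff_right)
    then have "y = (\<Sum>b\<in>B. (b \<bullet> y) *\<^sub>R b)" using expansion by blast
    also have "\<dots> = (\<Sum>b\<in>B. (b \<bullet> x) *\<^sub>R b)"
      using Bu unfolding y_def by (intro sum.cong) (auto simp: inner_diff_right inner_commute)
    finally have "x = (u \<bullet> x) *\<^sub>R u + (\<Sum>b\<in>B. (b \<bullet> x) *\<^sub>R b)"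
      unfolding y_def by (simp add: algebra_simps)
    then show "x = (\<Sum>b\<in>insert u B. (b \<bullet> x) *\<^sub>R b)" using fin uB by simp
  qed
qed

lemma symmetric_orthonormal_eigenbasis_of_subspace:
  fixes A :: "real^'n^'n"
  assumes sym: "transpose A = A"
  shows "subspace V \<Longrightarrow> (\<forall>x\<in>V. A *v x \<in> V) \<Longrightarrow>
    \<exists>B. finite B \<and> B \<subseteq> V \<and> pairwise orthogonal B \<and>
        (\<forall>b\<in>B. norm b = 1 \<and> A *v b = (b \<bullet> (A *v b)) *\<^sub>R b) \<and>
        (\<forall>x\<in>V. x = (\<Sum>b\<in>B. (b \<bullet> x) *\<^sub>R b))"
proof (induction "dim V" arbitrary: V rule: less_induct)
  case less
  note V = less.prems(1) and inv = less.prems(2)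
  show ?case
  proof (cases "V = {0}")
    case True
    then show ?thesis by (intro exI[of _ "{}"]) auto
  next
    case False
    obtain u where u: "u \<in> V" "norm u = 1"
      and u_max: "\<And>x. x \<in> V \<Longrightarrow> x \<bullet> (A *v x) \<le> (u \<bullet> (A *v u)) * (x \<bullet> x)"
      using quadratic_form_max_on_subspace[OF V False] by blast
    have eig: "A *v u = (u \<bullet> (A *v u)) *\<^sub>R u"
      using quadratic_form_maximiser_is_eigenvector[OF sym V _ u u_max] inv by blast
    define V' where "V' = V \<inter> {x. orthogonal u x}"
    have V': "subspace V'"
      unfolding V'_def by (rule subspace_inter[OF V subspace_orthogonal_to_vector])
    have "dim V' < dim V"
      unfolding V'_def using u by (intro dim_inter_orthogonal_less[OF V]) auto
    moreover have "\<forall>x\<in>V'. A *v x \<in> V'"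
      unfolding V'_def by (rule symmetric_invariant_orthogonal_complement[OF sym inv eig])
    ultimately obtain B where B: "finite B" "B \<subseteq> V'" "pairwise orthogonal B"
      "\<forall>b\<in>B. norm b = 1 \<and> A *v b = (b \<bullet> (A *v b)) *\<^sub>R b" "\<forall>x\<in>V'. x = (\<Sum>b\<in>B. (b \<bullet> x) *\<^sub>R b)"
      using less.hyps[OF _ V'] by blast
    have "pairwise orthogonal (insert u B)" "\<forall>x\<in>V. x = (\<Sum>b\<in>insert u B. (b \<bullet> x) *\<^sub>R b)"
      using orthonormal_expansion_insert[OF V u B(1) B(2)[unfolded V'_def] B(3) B(5)[unfolded V'_def]]
      by auto
    moreover have "insert u B \<subseteq> V" using u(1) B(2) unfolding V'_def by blast
    moreover have "\<forall>b\<in>insert u B. norm b = 1 \<and> A *v b = (b \<bullet> (A *v b)) *\<^sub>R b"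
      using B(4) u eig by simp
    ultimately show ?thesis using B(1) by blast
  qed
qed

lemma symmetric_orthonormal_eigenbasis:
  fixes A :: "real^'n^'n"
  assumes "transpose A = A"
  obtains B where "finite B" "pairwise orthogonal B" "\<And>b. b \<in> B \<Longrightarrow> norm b = 1"
    "\<And>b. b \<in> B \<Longrightarrow> A *v b = (b \<bullet> (A *v b)) *\<^sub>R b" "\<And>x. x = (\<Sum>b\<in>B. (b \<bullet> x) *\<^sub>R b)"
  using symmetric_orthonormal_eigenbasis_of_subspace[OF assms, of UNIV] that by auto

lemma finite_eigenvalues_symmetric:
  fixes A :: "real^'n^'n"
  assumes sym: "transpose A = A"
  shows "finite {l. \<exists>v. v \<noteq> 0 \<and> A *v v = l *\<^sub>R v}"
proof -
  obtain B where B: "finite B" "pairwise orthogonal B" "\<And>b. b \<in> B \<Longrightarrow> norm b = 1"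
    "\<And>b. b \<in> B \<Longrightarrow> A *v b = (b \<bullet> (A *v b)) *\<^sub>R b" "\<And>x. x = (\<Sum>b\<in>B. (b \<bullet> x) *\<^sub>R b)"
    using symmetric_orthonormal_eigenbasis[OF sym] by blast
  have "{l. \<exists>v. v \<noteq> 0 \<and> A *v v = l *\<^sub>R v} \<subseteq> (\<lambda>b. b \<bullet> (A *v b)) ` B"
  proof
    fix l assume "l \<in> {l. \<exists>v. v \<noteq> 0 \<and> A *v v = l *\<^sub>R v}"
    then obtain v where v: "v \<noteq> 0" "A *v v = l *\<^sub>R v" by blast
    have "\<exists>b\<in>B. b \<bullet> v \<noteq> 0"
    proof (rule ccontr)
      assume "\<not> ?thesis"
      then have "(\<Sum>b\<in>B. (b \<bullet> v) *\<^sub>R b) = 0" by simp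
      with B(5)[of v] v(1) show False by argo
    qed
    then obtain b where b: "b \<in> B" "b \<bullet> v \<noteq> 0" by blast
    have "l * (b \<bullet> v) = (A *v b) \<bullet> v"
      using v(2) symmetric_inner_matrix_vector[OF sym, of b v] by simp
    also have "\<dots> = (b \<bullet> (A *v b)) * (b \<bullet> v)"
      using B(4)[OF b(1)] by (metis inner_scaleR_left)
    finally show "l \<in> (\<lambda>b. b \<bullet> (A *v b)) ` B" using b by simp
  qed
  then show ?thesis using B(1) finite_subset by blast
qed

lemma quadratic_form_le_lambda_max:
  fixes A :: "real^'n^'n"
  assumes sym: "transpose A = A"
  shows "x \<bullet> (A *v x) \<le> lambda_max A * (x \<bullet> x)"
proof -
  have "(UNIV :: (real^'n) set) \<noteq> {0}"
  proof
    assume "(UNIV :: (real^'n) set) = {0}"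
    then have "(ones :: real^'n) = 0" by blast
    then show False by (simp add: ones_def vec_eq_iff)
  qed
  then obtain u where "norm u = 1" and u_max: "\<And>x. x \<bullet> (A *v x) \<le> (u \<bullet> (A *v u)) * (x \<bullet> x)"
    using quadratic_form_max_on_subspace[OF subspace_UNIV] by (metis UNIV_I)
  then have "u \<noteq> 0" and "A *v u = (u \<bullet> (A *v u)) *\<^sub>R u"
    using quadratic_form_maximiser_is_eigenvector[OF sym subspace_UNIV] by auto
  then have "u \<bullet> (A *v u) \<le> lambda_max A"
    unfolding lambda_max_def by (intro Max_ge finite_eigenvalues_symmetric[OF sym]) blast
  then show ?thesis using u_max[of x] by (meson inner_ge_zero mult_right_mono order_trans)
qed

lemma outer_self_matrix_vector: "outer u u *v x = (u \<bullet> x) *\<^sub>R (u :: real^'n)"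
  by (simp add: vec_eq_iff matrix_vector_mult_def outer_def inner_vec_def sum_distrib_left mult_ac)

lemma outer_sum_matrix_vector:
  fixes B :: "(real^'n) set"
  assumes "finite B"
  shows "(\<Sum>b\<in>B. k b *\<^sub>R outer b b) *v x = (\<Sum>b\<in>B. (k b * (b \<bullet> x)) *\<^sub>R b)"
  using assms
  by (induction B rule: finite_induct)
    (simp_all add: matrix_vector_mult_add_rdistrib outer_self_matrix_vector scaleR_matrix_vector_assoc[symmetric])

lemma psd_matrix_outer_sum:
  fixes B :: "(real^'n) set"
  assumes "finite B" "\<And>b. b \<in> B \<Longrightarrow> k b \<ge> 0"
  shows "psd_matrix (\<Sum>b\<in>B. k b *\<^sub>R outer b b)"
proof -
  have "v \<bullet> ((\<Sum>b\<in>B. k b *\<^sub>R outer b b) *v v) = (\<Sum>b\<in>B. k b * (b \<bullet> v)^2)" for v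
    by (simp add: outer_sum_matrix_vector[OF assms(1)] inner_sum_right inner_commute[of _ v]
        power2_eq_square mult_ac)
  moreover have "(\<Sum>b\<in>B. k b * (b \<bullet> v)^2) \<ge> 0" for v
    using assms(2) by (intro sum_nonneg mult_nonneg_nonneg) auto
  ultimately show ?thesis
    unfolding psd_matrix_def by (simp add: vec_eq_iff transpose_def sum_component outer_def mult.commute)
qed

lemma psd_sqrt_exists:
  fixes W :: "real^'n^'n"
  assumes W: "pos_def W"
  shows "\<exists>R. psd_matrix R \<and> R ** R = W"
proof -
  have "transpose W = W" using W unfolding pos_def_def by simp
  then obtain B where B: "finite B" "pairwise orthogonal B" "\<And>b. b \<in> B \<Longrightarrow> norm b = 1"
    "\<And>b. b \<in> B \<Longrightarrow> W *v b = (b \<bullet> (W *v b)) *\<^sub>R b" "\<And>x. x = (\<Sum>b\<in>B. (b \<bullet> x) *\<^sub>R b)"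
    using symmetric_orthonormal_eigenbasis by blast
  define lam where "lam b = b \<bullet> (W *v b)" for b
  have lam_nonneg: "lam b \<ge> 0" if "b \<in> B" for b
  proof -
    have "b \<noteq> 0" using B(3)[OF that] by auto
    then show ?thesis using W unfolding pos_def_def lam_def by (simp add: less_imp_le)
  qed
  define R :: "real^'n^'n" where "R = (\<Sum>b\<in>B. sqrt (lam b) *\<^sub>R outer b b)"
  have R_mult: "R *v x = (\<Sum>b\<in>B. (sqrt (lam b) * (b \<bullet> x)) *\<^sub>R b)" for x
    unfolding R_def by (rule outer_sum_matrix_vector[OF B(1)])
  have "R ** R = W"
  proof (rule matrix_eq[THEN iffD2], rule allI)
    fix x :: "real^'n"
    have "(R ** R) *v x = (\<Sum>c\<in>B. (sqrt (lam c) * (c \<bullet> (R *v x))) *\<^sub>R c)"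
      by (simp add: matrix_vector_mul_assoc[symmetric] R_mult)
    also have "\<dots> = (\<Sum>c\<in>B. (lam c * (c \<bullet> x)) *\<^sub>R c)"
    proof (intro sum.cong refl)
      fix c assume c: "c \<in> B"
      have "c \<bullet> (R *v x) = sqrt (lam c) * (c \<bullet> x)"
        unfolding R_mult by (rule inner_sum_orthonormal[OF B(1,2) c B(3)[OF c]])
      then show "(sqrt (lam c) * (c \<bullet> (R *v x))) *\<^sub>R c = (lam c * (c \<bullet> x)) *\<^sub>R c"
        using lam_nonneg[OF c] by (simp add: mult.assoc[symmetric])
    qed
    also have "\<dots> = W *v (\<Sum>b\<in>B. (b \<bullet> x) *\<^sub>R b)"
      unfolding vec.sum matrix_vector_mult_scaleR lam_def
      by (intro sum.cong refl) (subst B(4), auto)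
    also have "\<dots> = W *v x" using B(5)[of x] by simp
    finally show "(R ** R) *v x = W *v x" .
  qed
  moreover have "psd_matrix R"
    unfolding R_def using B(1) lam_nonneg by (intro psd_matrix_outer_sum) auto
  ultimately show ?thesis by blast
qed

text \<open>If R1^2 = R2^2 then D = R1 - R2 satisfies R1 D + R2 D + D R1 + D R2 = 0; on an eigenvector
  b of D with nonzero eigenvalue this forces b \<bullet> R1 b + b \<bullet> R2 b = 0, so both R_i b vanish.\<close>
lemma psd_sqrt_diff_eigenvector_eq_0:
  fixes R1 R2 :: "real^'n^'n"
  assumes R1: "psd_matrix R1" and R2: "psd_matrix R2" and eq: "R1 ** R1 = R2 ** R2"
    and eig: "(R1 - R2) *v b = m *\<^sub>R b"
  shows "(R1 - R2) *v b = 0"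
proof (cases "m = 0")
  case False
  define D where "D = R1 - R2"
  have symD: "transpose D = D" using R1 R2 unfolding D_def psd_matrix_def
    by (simp add: vec_eq_iff transpose_def)
  have Db: "D *v b = m *\<^sub>R b" using eig unfolding D_def .
  have "R1 *v (R1 *v b) = R2 *v (R2 *v b)" using eq by (simp add: matrix_vector_mul_assoc)
  then have "0 = b \<bullet> (R1 *v (D *v b) + R2 *v (D *v b) + D *v (R1 *v b) + D *v (R2 *v b))"
    unfolding D_def by (simp add: matrix_vector_mult_diff_rdistrib matrix_vector_mult_diff_distrib algebra_simps)
  also have "\<dots> = 2 * m * (b \<bullet> (R1 *v b) + b \<bullet> (R2 *v b))"
    by (simp add: inner_add_right Db matrix_vector_mult_scaleR symmetric_inner_matrix_vector[OF symD, of b]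
        algebra_simps)
  finally have "b \<bullet> (R1 *v b) + b \<bullet> (R2 *v b) = 0" using False by simp
  moreover have "b \<bullet> (R1 *v b) \<ge> 0" "b \<bullet> (R2 *v b) \<ge> 0" using R1 R2 unfolding psd_matrix_def by auto
  ultimately have "b \<bullet> (R1 *v b) = 0" "b \<bullet> (R2 *v b) = 0" by linarith+
  then have "R1 *v b = 0" "R2 *v b = 0"
    by (simp_all add: psd_matrix_vector_eq_0[OF R1] psd_matrix_vector_eq_0[OF R2])
  then show ?thesis by (simp add: matrix_vector_mult_diff_rdistrib)
qed (use eig in simp)

lemma psd_sqrt_unique:
  fixes R1 R2 :: "real^'n^'n"
  assumes R1: "psd_matrix R1" and R2: "psd_matrix R2" and eq: "R1 ** R1 = R2 ** R2"
  shows "R1 = R2"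
proof -
  have "transpose (R1 - R2) = R1 - R2" using R1 R2 unfolding psd_matrix_def
    by (simp add: vec_eq_iff transpose_def)
  then obtain B where B: "finite B" "pairwise orthogonal B" "\<And>b. b \<in> B \<Longrightarrow> norm b = 1"
    "\<And>b. b \<in> B \<Longrightarrow> (R1 - R2) *v b = (b \<bullet> ((R1 - R2) *v b)) *\<^sub>R b"
    "\<And>x. x = (\<Sum>b\<in>B. (b \<bullet> x) *\<^sub>R b)"
    using symmetric_orthonormal_eigenbasis by blast
  have "(R1 - R2) *v x = 0" for x
  proof -
    have "(R1 - R2) *v x = (R1 - R2) *v (\<Sum>b\<in>B. (b \<bullet> x) *\<^sub>R b)" using B(5)[of x] by simp
    also have "\<dots> = 0"
      using psd_sqrt_diff_eigenvector_eq_0[OF R1 R2 eq B(4)]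
      by (simp add: vec.sum matrix_vector_mult_scaleR)
    finally show ?thesis .
  qed
  then show ?thesis by (simp add: matrix_eq matrix_vector_mult_diff_rdistrib)
qed

lemma mat_sqrt:
  fixes W :: "real^'n^'n"
  assumes "pos_def W"
  shows "psd_matrix (mat_sqrt W)" "mat_sqrt W ** mat_sqrt W = W"
proof -
  have "\<exists>!R. psd_matrix R \<and> R ** R = W"
    using psd_sqrt_exists[OF assms] psd_sqrt_unique by metis
  from theI'[OF this] show "psd_matrix (mat_sqrt W)" "mat_sqrt W ** mat_sqrt W = W"
    unfolding mat_sqrt_def psd_matrix_def by auto
qed

lemma pos_def_invertible:
  fixes W :: "real^'n^'n"
  assumes "pos_def W"
  shows "invertible W"
proof -
  have "W *v x = 0 \<Longrightarrow> x = 0" for x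
    using assms unfolding pos_def_def by (metis inner_zero_right less_irrefl)
  then show ?thesis unfolding invertible_left_inverse matrix_left_invertible_ker by blast
qed

lemma quadratic_form_le_lambda_max_congruence:
  fixes W C :: "real^'n^'n"
  assumes W: "pos_def W" and C: "transpose C = C"
  shows "m \<bullet> (C *v m) \<le> lambda_max (mat_sqrt W ** C ** mat_sqrt W) * (m \<bullet> (matrix_inv W *v m))"
proof -
  define R where "R = mat_sqrt W"
  have R_sym: "transpose R = R" and RR: "R ** R = W"
    using mat_sqrt[OF W] unfolding R_def psd_matrix_def by auto
  have W_inv: "W ** matrix_inv W = mat 1"
    using pos_def_invertible[OF W] unfolding invertible_def matrix_inv_def
    by (rule someI_ex[THEN conjunct1])
  define y where "y = R *v (matrix_inv W *v m)"
  have Ry: "R *v y = m" unfolding y_def by (simp add: matrix_vector_mul_assoc matrix_mul_assoc RR W_inv)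
  have "m \<bullet> (C *v m) = y \<bullet> ((R ** C ** R) *v y)"
    using symmetric_inner_matrix_vector[OF R_sym, of y "C *v m"] Ry
    by (simp add: matrix_vector_mul_assoc[symmetric])
  also have "\<dots> \<le> lambda_max (R ** C ** R) * (y \<bullet> y)"
    by (rule quadratic_form_le_lambda_max) (simp add: matrix_transpose_mul R_sym C matrix_mul_assoc)
  also have "y \<bullet> y = m \<bullet> (matrix_inv W *v m)"
    using symmetric_inner_matrix_vector[OF R_sym, of y "matrix_inv W *v m"] Ry unfolding y_def by simp
  finally show ?thesis unfolding R_def .
qed

lemma wnorm_sq_eq_sum_rows:
  fixes M :: "real^'n^'d" and W :: "real^'n^'n"
  shows "wnorm_sq M W = (\<Sum>a\<in>UNIV. M $ a \<bullet> (matrix_inv W *v M $ a))"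
  unfolding wnorm_sq_def trace_def
  by (simp add: matrix_matrix_mult_def transpose_def inner_vec_def matrix_vector_mult_def
      sum_distrib_left sum_distrib_right mult_ac)
    (rule sum.cong[OF refl], subst sum.swap, simp add: mult_ac)

lemma norm_matrix_vector_sq_eq_sum_rows:
  fixes M :: "real^'n^'d"
  shows "(norm (M *v u))^2 = (\<Sum>a\<in>UNIV. (M $ a \<bullet> u)^2)"
  unfolding power2_norm_eq_inner by (simp add: inner_vec_def matrix_vector_mult_def power2_eq_square)

lemma power2_norm_add_le:
  fixes a b :: "'a::real_normed_vector"
  shows "(norm (a + b))^2 \<le> 2 * (norm a)^2 + 2 * (norm b)^2"
proof -
  have "(norm (a + b))^2 \<le> (norm a + norm b)^2"
    by (intro power_mono norm_triangle_ineq) simp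
  also have "\<dots> \<le> 2 * (norm a)^2 + 2 * (norm b)^2"
    using zero_le_power2[of "norm a - norm b"] by (simp add: power2_eq_square algebra_simps)
  finally show ?thesis .
qed

lemma integral_power2_norm_add_le:
  fixes a b :: "'s \<Rightarrow> 'a::real_normed_vector"
  assumes "integrable D (\<lambda>s. (norm (a s + b s))^2)"
    and "integrable D (\<lambda>s. (norm (a s))^2)" "integrable D (\<lambda>s. (norm (b s))^2)"
  shows "(\<integral>s. (norm (a s + b s))^2 \<partial>D) \<le> 2 * (\<integral>s. (norm (a s))^2 \<partial>D) + 2 * (\<integral>s. (norm (b s))^2 \<partial>D)"
proof -
  have "(\<integral>s. (norm (a s + b s))^2 \<partial>D) \<le> (\<integral>s. 2 * (norm (a s))^2 + 2 * (norm (b s))^2 \<partial>D)"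
    using assms by (intro integral_mono power2_norm_add_le) auto
  also have "\<dots> = 2 * (\<integral>s. (norm (a s))^2 \<partial>D) + 2 * (\<integral>s. (norm (b s))^2 \<partial>D)"
    using assms(2,3) by simp
  finally show ?thesis .
qed

lemma square_integrable_imp_integrable_vector:
  fixes v :: "'s \<Rightarrow> 'a::{banach, second_countable_topology}"
  assumes "finite_measure D" "v \<in> borel_measurable D" "integrable D (\<lambda>s. (norm (v s))^2)"
  shows "integrable D v"
proof -
  interpret finite_measure D by fact
  have "(\<lambda>s. norm (v s)) \<in> borel_measurable D" using assms(2) by measurable
  then have "integrable D (\<lambda>s. norm (v s))"
    using assms(3) by (rule square_integrable_imp_integrable)
  then show ?thesis using assms(2) by (simp add: integrable_norm_iff)
qed

lemma integrable_power2_norm_affine: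
  fixes v :: "'s \<Rightarrow> 'a::real_normed_vector" and T :: "'a \<Rightarrow> 'b::real_normed_vector"
  assumes "finite_measure D" and meas: "v \<in> borel_measurable D"
    and sq: "integrable D (\<lambda>s. (norm (v s))^2)" and T: "bounded_linear T"
  shows "integrable D (\<lambda>s. (norm (c + T (v s)))^2)"
proof -
  interpret finite_measure D by fact
  obtain K where K: "\<And>x. norm (T x) \<le> norm x * K"
    using bounded_linear.pos_bounded[OF T] by blast
  have bound: "(norm (c + T y))^2 \<le> 2 * (norm c)^2 + 2 * K^2 * (norm y)^2" for y
  proof -
    have "(norm (c + T y))^2 \<le> 2 * (norm c)^2 + 2 * (norm (T y))^2" by (rule power2_norm_add_le)
    also have "(norm (T y))^2 \<le> (norm y * K)^2" by (intro power_mono K) simp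
    finally show ?thesis by (simp add: power_mult_distrib mult_ac)
  qed
  have cont: "continuous_on UNIV (\<lambda>y. (norm (c + T y))^2)"
    by (intro continuous_intros linear_continuous_on T)
  show ?thesis
  proof (rule Bochner_Integration.integrable_bound[of _ "\<lambda>s. 2 * (norm c)^2 + 2 * K^2 * (norm (v s))^2"])
    show "integrable D (\<lambda>s. 2 * (norm c)^2 + 2 * K^2 * (norm (v s))^2)"
      using sq by (intro Bochner_Integration.integrable_add integrable_const integrable_mult_right)
    show "(\<lambda>s. (norm (c + T (v s)))^2) \<in> borel_measurable D"
      by (rule borel_measurable_continuous_on[OF cont meas])
    show "AE s in D. norm ((norm (c + T (v s)))^2) \<le> norm (2 * (norm c)^2 + 2 * K^2 * (norm (v s))^2)"
      using bound by (intro AE_I2) (auto intro: order_trans[OF _ abs_ge_self])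
  qed
qed

lemma norm_outer_self_le: "norm (outer u u) \<le> real CARD('n) * (norm (u :: real^'n))^2"
proof -
  have "norm (outer u u) \<le> (\<Sum>i\<in>UNIV. \<bar>norm (outer u u $ i)\<bar>)"
    unfolding norm_vec_def by (rule L2_set_le_sum_abs)
  also have "\<dots> = (\<Sum>i\<in>UNIV. \<bar>u $ i\<bar> * norm u)"
  proof (intro sum.cong refl)
    fix i
    have "outer u u $ i = u $ i *\<^sub>R u" by (simp add: outer_def vec_eq_iff)
    then show "\<bar>norm (outer u u $ i)\<bar> = \<bar>u $ i\<bar> * norm u" by simp
  qed
  also have "\<dots> \<le> (\<Sum>i\<in>(UNIV :: 'n set). norm u * norm u)"
    by (intro sum_mono mult_right_mono component_le_norm_cart) simp
  finally show ?thesis by (simp add: power2_eq_square)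
qed

lemma integrable_outer_self:
  fixes v :: "'s \<Rightarrow> real^'n"
  assumes meas: "v \<in> borel_measurable D" and sq: "integrable D (\<lambda>s. (norm (v s))^2)"
  shows "integrable D (\<lambda>s. outer (v s) (v s))"
proof (rule Bochner_Integration.integrable_bound)
  show "integrable D (\<lambda>s. real CARD('n) * (norm (v s))^2)" using sq by simp
  have "continuous_on UNIV (\<lambda>y :: real^'n. outer y y)"
    unfolding outer_def by (intro continuous_on_vec_lambda continuous_intros)
  then show "(\<lambda>s. outer (v s) (v s)) \<in> borel_measurable D"
    using borel_measurable_continuous_on[OF _ meas] by blast
  show "AE s in D. norm (outer (v s) (v s)) \<le> norm (real CARD('n) * (norm (v s))^2)"
    using norm_outer_self_le by (intro AE_I2) (auto intro: order_trans[OF _ abs_ge_self])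
qed

lemma symmetric_integral_outer_self:
  fixes v :: "'s \<Rightarrow> real^'n"
  assumes "integrable D (\<lambda>s. outer (v s) (v s))"
  shows "transpose (\<integral>s. outer (v s) (v s) \<partial>D) = (\<integral>s. outer (v s) (v s) \<partial>D)"
proof -
  have entry: "(\<integral>s. outer (v s) (v s) \<partial>D) $ i $ j = (\<integral>s. v s $ i * v s $ j \<partial>D)" for i j
    using integral_bounded_linear[OF bounded_linear_compose[OF bounded_linear_vec_nth bounded_linear_vec_nth] assms,
        of i j]
    by (simp add: outer_def)
  show ?thesis by (simp add: vec_eq_iff transpose_def entry mult.commute)
qed

lemma integral_inner_centered_sq:
  fixes v :: "'s \<Rightarrow> real^'n"
  assumes "prob_space D" and meas: "v \<in> borel_measurable D" and sq: "integrable D (\<lambda>s. (norm (v s))^2)"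
  defines "\<mu> \<equiv> integral\<^sup>L D v"
  shows "(\<integral>s. (m \<bullet> (\<mu> - v s))^2 \<partial>D) = m \<bullet> (((\<integral>s. outer (v s) (v s) \<partial>D) - outer \<mu> \<mu>) *v m)"
proof -
  interpret prob_space D by fact
  have int_v: "integrable D v"
    using square_integrable_imp_integrable_vector[OF finite_measure_axioms meas sq] .
  have int_outer: "integrable D (\<lambda>s. outer (v s) (v s))" by (rule integrable_outer_self[OF meas sq])
  have quadratic_linear: "bounded_linear (\<lambda>X :: real^'n^'n. m \<bullet> (X *v m))"
  proof -
    have "linear (\<lambda>X :: real^'n^'n. X *v m)"
      by (rule linearI) (simp_all add: matrix_vector_mult_add_rdistrib scaleR_matrix_vector_assoc[symmetric])
    then show ?thesis
      by (intro bounded_linear_compose[OF bounded_linear_inner_right]) (simp add: linear_conv_bounded_linear)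
  qed
  have quadratic_outer: "m \<bullet> (outer u u *v m) = (m \<bullet> u)^2" for u
    by (simp add: outer_self_matrix_vector inner_commute power2_eq_square)
  have int_lin: "integrable D (\<lambda>s. m \<bullet> v s)"
    by (rule integrable_bounded_linear[OF bounded_linear_inner_right int_v])
  have int_sq: "integrable D (\<lambda>s. (m \<bullet> v s)^2)"
    using integrable_bounded_linear[OF quadratic_linear int_outer] by (simp add: quadratic_outer)
  have "(\<integral>s. (m \<bullet> (\<mu> - v s))^2 \<partial>D) = (\<integral>s. (m \<bullet> \<mu>)^2 - 2 * (m \<bullet> \<mu>) * (m \<bullet> v s) + (m \<bullet> v s)^2 \<partial>D)"
    by (simp add: inner_diff_right power2_eq_square algebra_simps)
  also have "\<dots> = (m \<bullet> \<mu>)^2 - 2 * (m \<bullet> \<mu>) * (\<integral>s. m \<bullet> v s \<partial>D) + (\<integral>s. (m \<bullet> v s)^2 \<partial>D)"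
    using int_lin int_sq prob_space by simp
  also have "(\<integral>s. m \<bullet> v s \<partial>D) = m \<bullet> \<mu>"
    unfolding \<mu>_def by (rule integral_bounded_linear[OF bounded_linear_inner_right int_v])
  also have "(\<integral>s. (m \<bullet> v s)^2 \<partial>D) = m \<bullet> ((\<integral>s. outer (v s) (v s) \<partial>D) *v m)"
    using integral_bounded_linear[OF quadratic_linear int_outer] by (simp add: quadratic_outer)
  finally show ?thesis
    by (simp add: matrix_vector_mult_diff_rdistrib inner_diff_right quadratic_outer power2_eq_square)
qed

lemma integral_norm_sq_centered_le:
  fixes v :: "'s \<Rightarrow> real^'n" and M :: "real^'n^'d"
  assumes W: "pos_def W" and D: "prob_space D"
    and meas: "v \<in> borel_measurable D" and sq: "integrable D (\<lambda>s. (norm (v s))^2)"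
  defines "\<mu> \<equiv> integral\<^sup>L D v"
  shows "(\<integral>s. (norm (M *v (\<mu> - v s)))^2 \<partial>D)
    \<le> lambda_max (mat_sqrt W ** ((\<integral>s. outer (v s) (v s) \<partial>D) - outer \<mu> \<mu>) ** mat_sqrt W) * wnorm_sq M W"
proof -
  interpret prob_space D by (rule D)
  define C where "C = (\<integral>s. outer (v s) (v s) \<partial>D) - outer \<mu> \<mu>"
  have C_sym: "transpose C = C"
    using symmetric_integral_outer_self[OF integrable_outer_self[OF meas sq]]
    by (simp add: C_def vec_eq_iff transpose_def outer_def mult.commute)
  have int_rows: "integrable D (\<lambda>s. (M $ a \<bullet> (\<mu> - v s))^2)" for a
    using integrable_power2_norm_affine[OF finite_measure_axioms meas sq bounded_linear_inner_right[of "- M $ a"],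
        of "M $ a \<bullet> \<mu>"]
    by (simp add: inner_diff_right)
  have "(\<integral>s. (norm (M *v (\<mu> - v s)))^2 \<partial>D) = (\<Sum>a\<in>UNIV. \<integral>s. (M $ a \<bullet> (\<mu> - v s))^2 \<partial>D)"
    unfolding norm_matrix_vector_sq_eq_sum_rows by (intro Bochner_Integration.integral_sum int_rows)
  also have "\<dots> = (\<Sum>a\<in>UNIV. M $ a \<bullet> (C *v M $ a))"
    using integral_inner_centered_sq[OF D meas sq] unfolding C_def \<mu>_def by simp
  also have "\<dots> \<le> (\<Sum>a\<in>UNIV. lambda_max (mat_sqrt W ** C ** mat_sqrt W) * (M $ a \<bullet> (matrix_inv W *v M $ a)))"
    by (intro sum_mono quadratic_form_le_lambda_max_congruence[OF W C_sym])
  finally show ?thesis unfolding wnorm_sq_eq_sum_rows C_def by (simp add: sum_distrib_left)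
qed

lemma jac_ones_eq_0_at_minimiser:
  fixes fs :: "'n::finite \<Rightarrow> real^'d \<Rightarrow> real"
  assumes grad: "\<And>i y. (fs i has_derivative (\<lambda>h. gradf i y \<bullet> h)) (at y)"
    and min: "\<And>y. favg fs xstar \<le> favg fs y"
  shows "jac gradf xstar *v ones = 0"
proof -
  define g where "g = (\<Sum>i\<in>UNIV. gradf i xstar)"
  have "((\<lambda>y. \<Sum>i\<in>UNIV. fs i y) has_derivative (\<lambda>h. g \<bullet> h)) (at xstar)"
    unfolding g_def inner_sum_left by (intro has_derivative_sum grad)
  then have "(favg fs has_derivative (\<lambda>h. (g \<bullet> h) / real CARD('n))) (at xstar)"
    unfolding favg_def divide_inverse by (rule has_derivative_mult_left)
  from differential_zero_maxmin[OF UNIV_I open_UNIV this] min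
  have "(\<lambda>h. (g \<bullet> h) / real CARD('n)) = (\<lambda>h. 0)" by blast
  then have "(g \<bullet> g) / real CARD('n) = 0" by metis
  then have "g = 0" by simp
  then show ?thesis
    by (simp add: vec_eq_iff matrix_vector_mult_def jac_def ones_def g_def sum_component)
qed

lemma jacsketch_estimate_split:
  fixes J G Gs :: "real^'n^'d"
  assumes "Gs *v ones = 0"
  shows "r *\<^sub>R (J *v ones) + r *\<^sub>R ((G - J) *v v)
    = r *\<^sub>R ((G - Gs) *v v) + r *\<^sub>R ((J - Gs) *v (ones - v))"
  using assms by (simp add: matrix_vector_mult_diff_rdistrib matrix_vector_mult_diff_distrib algebra_simps)

lemma jacsketch_second_moment_le:
  fixes v :: "'s \<Rightarrow> real^'n" and J G Gs :: "real^'n^'d"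
  assumes W: "pos_def W" and D: "prob_space D"
    and meas: "v \<in> borel_measurable D" and sq: "integrable D (\<lambda>s. (norm (v s))^2)"
    and mean: "integral\<^sup>L D v = ones" and Gs: "Gs *v ones = 0"
  shows "(\<integral>s. (norm ((1 / c) *\<^sub>R (J *v ones) + (1 / c) *\<^sub>R ((G - J) *v v s)))^2 \<partial>D)
    \<le> 2 * (\<integral>s. (norm ((1 / c) *\<^sub>R ((G - Gs) *v v s)))^2 \<partial>D)
      + 2 * lambda_max (mat_sqrt W ** ((\<integral>s. outer (v s) (v s) \<partial>D) - outer ones ones) ** mat_sqrt W)
          / c^2 * wnorm_sq (J - Gs) W"
proof -
  interpret prob_space D by (rule D)
  define P where "P = (1 / c) *\<^sub>R (J - Gs)"
  have P_mult: "P *v y = (1 / c) *\<^sub>R ((J - Gs) *v y)" for y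
    unfolding P_def by (simp add: scaleR_matrix_vector_assoc)
  note affine = integrable_power2_norm_affine[OF finite_measure_axioms meas sq]
  note split = jacsketch_estimate_split[OF Gs, of "1 / c"]
  have "integrable D (\<lambda>s. (norm ((1 / c) *\<^sub>R (J *v ones) + (1 / c) *\<^sub>R ((G - J) *v v s)))^2)"
    using affine[OF matrix_vector_mul_bounded_linear, of "(1 / c) *\<^sub>R (J *v ones)" "(1 / c) *\<^sub>R (G - J)"]
    by (simp add: scaleR_matrix_vector_assoc)
  moreover have "integrable D (\<lambda>s. (norm ((1 / c) *\<^sub>R ((G - Gs) *v v s)))^2)"
    using affine[OF matrix_vector_mul_bounded_linear, of 0] by (simp add: scaleR_matrix_vector_assoc)
  moreover have "integrable D (\<lambda>s. (norm (P *v (ones - v s)))^2)"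
    using affine[OF bounded_linear_minus[OF matrix_vector_mul_bounded_linear[of P]], of "P *v ones"]
    by (simp add: matrix_vector_mult_diff_distrib)
  ultimately have "(\<integral>s. (norm ((1 / c) *\<^sub>R (J *v ones) + (1 / c) *\<^sub>R ((G - J) *v v s)))^2 \<partial>D)
      \<le> 2 * (\<integral>s. (norm ((1 / c) *\<^sub>R ((G - Gs) *v v s)))^2 \<partial>D)
        + 2 * (\<integral>s. (norm (P *v (ones - v s)))^2 \<partial>D)"
    unfolding split P_mult by (rule integral_power2_norm_add_le)
  also have "(\<integral>s. (norm (P *v (ones - v s)))^2 \<partial>D) = (\<integral>s. (norm ((J - Gs) *v (ones - v s)))^2 \<partial>D) / c^2"
    unfolding P_mult by (simp add: power_divide)
  also have "(\<integral>s. (norm ((J - Gs) *v (ones - v s)))^2 \<partial>D)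
      \<le> lambda_max (mat_sqrt W ** ((\<integral>s. outer (v s) (v s) \<partial>D) - outer ones ones) ** mat_sqrt W)
          * wnorm_sq (J - Gs) W"
    using integral_norm_sq_centered_le[OF W D meas sq, of "J - Gs"] unfolding mean .
  finally show ?thesis by (simp add: divide_right_mono)
qed

theorem lemma3p10:
  fixes fs :: "'n::finite \<Rightarrow> real^'d \<Rightarrow> real"
    and gradf :: "'n \<Rightarrow> real^'d \<Rightarrow> real^'d"
    and xstar x :: "real^'d"
    and W :: "real^'n^'n"
    and D :: "'s measure"
    and S :: "'s \<Rightarrow> real^'q::finite^'n"
    and \<theta> :: "'s \<Rightarrow> real"
    and L1 :: real
    and J :: "real^'n^'d"
  assumes grad: "\<And>i y. (fs i has_derivative (\<lambda>h. gradf i y \<bullet> h)) (at y)"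
    and min: "\<And>y. favg fs xstar \<le> favg fs y"
    and W: "pos_def W"
    and D: "prob_space D"
    and meas: "(\<lambda>s. \<theta> s *\<^sub>R (sketch_proj W (S s) *v ones)) \<in> borel_measurable D"
    and integ: "integrable D (\<lambda>s. (norm (\<theta> s *\<^sub>R (sketch_proj W (S s) *v ones)))\<^sup>2)"
    and unbiased: "(\<integral>s. \<theta> s *\<^sub>R (sketch_proj W (S s) *v ones) \<partial>D) = ones"
    and L1pos: "L1 > 0"
    and L1: "\<And>y. (\<integral>s. (norm (grad_sketch gradf W (\<theta> s) (S s) y
                                - grad_sketch gradf W (\<theta> s) (S s) xstar))\<^sup>2 \<partial>D)
                \<le> 2 * L1 * (favg fs y - favg fs xstar)"
  shows "(\<integral>s. (norm ((1 / real CARD('n)) *\<^sub>R (J *v ones)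
              + (\<theta> s / real CARD('n)) *\<^sub>R ((jac gradf x - J) *v (sketch_proj W (S s) *v ones))))\<^sup>2 \<partial>D)
         \<le> 4 * L1 * (favg fs x - favg fs xstar)
           + 2 * rho D W \<theta> S / (real CARD('n))\<^sup>2 * wnorm_sq (J - jac gradf xstar) W"
proof -
  define n where "n = real CARD('n)"
  define v where "v = (\<lambda>s. \<theta> s *\<^sub>R (sketch_proj W (S s) *v ones))"
  have v: "v \<in> borel_measurable D" "integrable D (\<lambda>s. (norm (v s))^2)" "integral\<^sup>L D v = ones"
    using meas integ unbiased unfolding v_def by simp_all
  have estimate: "(\<theta> s / n) *\<^sub>R ((jac gradf x - J) *v (sketch_proj W (S s) *v ones))
      = (1 / n) *\<^sub>R ((jac gradf x - J) *v v s)" for s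
    unfolding v_def by (simp add: matrix_vector_mult_scaleR)
  have "grad_sketch gradf W (\<theta> s) (S s) x - grad_sketch gradf W (\<theta> s) (S s) xstar
      = (1 / n) *\<^sub>R ((jac gradf x - jac gradf xstar) *v v s)" for s
    unfolding grad_sketch_def v_def n_def
    by (simp add: matrix_vector_mult_scaleR matrix_vector_mult_diff_rdistrib algebra_simps)
  then have "(\<integral>s. (norm ((1 / n) *\<^sub>R ((jac gradf x - jac gradf xstar) *v v s)))^2 \<partial>D)
      \<le> 2 * L1 * (favg fs x - favg fs xstar)"
    using L1[of x] by simp
  moreover have "rho D W \<theta> S
      = lambda_max (mat_sqrt W ** ((\<integral>s. outer (v s) (v s) \<partial>D) - outer ones ones) ** mat_sqrt W)"
    unfolding rho_def v_def ..
  ultimately show ?thesis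
    using jacsketch_second_moment_le[OF W D v jac_ones_eq_0_at_minimiser[OF grad min], of n J "jac gradf x"]
    unfolding estimate n_def[symmetric] by auto
qed

end
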